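(* Let $\mathcal C$ be a class of groups with invariant $\Lambda$-valued pseudo-norms which is closed under taking subgroups (with restricted pseudo-norm) and under isomorphism. Let $G$ be a finitely presented group and $\ell$ an invariant $\Lambda$-valued pseudo-norm on $G$. If $(G,\ell)$ is metrically LE$\mathcal C$, then $(G,\ell)$ is fully residually $\mathcal C$: for every finite $D\subseteq G$ and finite $Q\subseteq\Lambda\cap\mathbb Q$ with $0\in Q$ there are $(C,\ell_C)\in\mathcal C$ and a group homomorphism $\varphi:G\to C$ which is a $D$-$Q$-almost-homomorphism.
   Context: $\Lambda$ is a closed convex subset of $[0,\infty)$ containing $0$. A pseudo-norm on $G$ is $\ell:G\to\Lambda$ with $\ell(1)=0$, $\ell(g)=\ell(g^{-1})$, $\ell(gh)\le\ell(g)+\ell(h)$; invariant if $\ell(h^{-1}gh)=\ell(g)$. For pseudo-normed $(G_1,\ell_1),(G_2,\ell_2)$, finite $D\subseteq G_1$ and finite $Q\subseteq\Lambda\cap\mathbb Q$ with $0\in Q$, $\varphi:G_1\to G_2$ is a $D$-$Q$-almost-homomorphism if injective on $D$, $\varphi(hg)=\varphi(h)\varphi(g)$ whenever $h,g,hg\in D$, and $\ell_1(g)\,\square\,q\iff\ell_2(\varphi(g))\,\square\,q$ for all $g\in D,q\in Q,\square\in\{<,=,>\}$. $(G,\ell)$ is metrically LE$\mathcal C$ if for all such $D,Q$ there are $(C,\ell_C)\in\mathcal C$ and a $D$-$Q$-almost-homomorphism $G\to C$. *)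

theory Defs
  imports "HOL-Analysis.Analysis" "HOL-Algebra.Generated_Groups"
begin

definition pseudo_norm :: "real set \<Rightarrow> ('a, 'm) monoid_scheme \<Rightarrow> ('a \<Rightarrow> real) \<Rightarrow> bool" where
  "pseudo_norm \<Lambda> G l \<longleftrightarrow>
     (\<forall>g \<in> carrier G. l g \<in> \<Lambda>) \<and>
     l \<one>\<^bsub>G\<^esub> = 0 \<and>
     (\<forall>g \<in> carrier G. l g = l (inv\<^bsub>G\<^esub> g)) \<and>
     (\<forall>g \<in> carrier G. \<forall>h \<in> carrier G. l (g \<otimes>\<^bsub>G\<^esub> h) \<le> l g + l h)"

definition invariant_pseudo_norm :: "real set \<Rightarrow> ('a, 'm) monoid_scheme \<Rightarrow> ('a \<Rightarrow> real) \<Rightarrow> bool" where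
  "invariant_pseudo_norm \<Lambda> G l \<longleftrightarrow> pseudo_norm \<Lambda> G l \<and>
     (\<forall>g \<in> carrier G. \<forall>h \<in> carrier G. l (inv\<^bsub>G\<^esub> h \<otimes>\<^bsub>G\<^esub> g \<otimes>\<^bsub>G\<^esub> h) = l g)"

definition almost_hom ::
  "('a, 'm) monoid_scheme \<Rightarrow> ('a \<Rightarrow> real) \<Rightarrow> ('b, 'n) monoid_scheme \<Rightarrow> ('b \<Rightarrow> real)
    \<Rightarrow> 'a set \<Rightarrow> real set \<Rightarrow> ('a \<Rightarrow> 'b) \<Rightarrow> bool" where
  "almost_hom G1 l1 G2 l2 D Q \<phi> \<longleftrightarrow>
     \<phi> \<in> carrier G1 \<rightarrow> carrier G2 \<and>
     inj_on \<phi> D \<and>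
     (\<forall>h \<in> D. \<forall>g \<in> D. h \<otimes>\<^bsub>G1\<^esub> g \<in> D \<longrightarrow> \<phi> (h \<otimes>\<^bsub>G1\<^esub> g) = \<phi> h \<otimes>\<^bsub>G2\<^esub> \<phi> g) \<and>
     (\<forall>g \<in> D. \<forall>q \<in> Q.
        (l1 g < q \<longleftrightarrow> l2 (\<phi> g) < q) \<and>
        (l1 g = q \<longleftrightarrow> l2 (\<phi> g) = q) \<and>
        (l1 g > q \<longleftrightarrow> l2 (\<phi> g) > q))"

definition admissible_data :: "real set \<Rightarrow> ('a, 'm) monoid_scheme \<Rightarrow> 'a set \<Rightarrow> real set \<Rightarrow> bool" where
  "admissible_data \<Lambda> G D Q \<longleftrightarrow>
     finite D \<and> D \<subseteq> carrier G \<and> finite Q \<and> Q \<subseteq> \<Lambda> \<inter> \<rat> \<and> 0 \<in> Q"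

definition metrically_LE ::
  "real set \<Rightarrow> ('b monoid \<times> ('b \<Rightarrow> real)) set \<Rightarrow> ('a, 'm) monoid_scheme \<Rightarrow> ('a \<Rightarrow> real) \<Rightarrow> bool" where
  "metrically_LE \<Lambda> \<C> G l \<longleftrightarrow>
     (\<forall>D Q. admissible_data \<Lambda> G D Q \<longrightarrow>
        (\<exists>(C, lC) \<in> \<C>. \<exists>\<phi>. almost_hom G l C lC D Q \<phi>))"

definition fully_residually ::
  "real set \<Rightarrow> ('b monoid \<times> ('b \<Rightarrow> real)) set \<Rightarrow> ('a, 'm) monoid_scheme \<Rightarrow> ('a \<Rightarrow> real) \<Rightarrow> bool" where
  "fully_residually \<Lambda> \<C> G l \<longleftrightarrow>
     (\<forall>D Q. admissible_data \<Lambda> G D Q \<longrightarrow>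
        (\<exists>(C, lC) \<in> \<C>. \<exists>\<phi> \<in> hom G C. almost_hom G l C lC D Q \<phi>))"

text \<open>Words over a set of generators: (True, s) stands for s, (False, s) for s\<inverse>.\<close>
type_synonym 'a word = "(bool \<times> 'a) list"

definition word_eval :: "('a, 'm) monoid_scheme \<Rightarrow> 'a word \<Rightarrow> 'a" where
  "word_eval G w = foldr (\<lambda>(b, s) acc. (if b then s else inv\<^bsub>G\<^esub> s) \<otimes>\<^bsub>G\<^esub> acc) w \<one>\<^bsub>G\<^esub>"

text \<open>Elementary moves of the presentation \<langle>S | R\<rangle>: insertion of a cancelling pair
  or of a relator at an arbitrary position.\<close>
definition pres_step :: "'a set \<Rightarrow> 'a word set \<Rightarrow> 'a word \<Rightarrow> 'a word \<Rightarrow> bool" where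
  "pres_step S R x y \<longleftrightarrow> (\<exists>u v. x = u @ v \<and>
      ((\<exists>b s. s \<in> S \<and> y = u @ [(b, s), (\<not> b, s)] @ v) \<or>
       (\<exists>r \<in> R. y = u @ r @ v)))"

text \<open>Equality in the group presented by \<langle>S | R\<rangle>: equivalence closure of the moves.\<close>
definition pres_equiv :: "'a set \<Rightarrow> 'a word set \<Rightarrow> 'a word \<Rightarrow> 'a word \<Rightarrow> bool" where
  "pres_equiv S R = (\<lambda>x y. pres_step S R x y \<or> pres_step S R y x)\<^sup>*\<^sup>*"

text \<open>G is finitely presented: a finite generating set S and finitely many relators R
  such that G is the group presented by \<langle>S | R\<rangle> via the evaluation map, i.e. a word
  over S is trivial in G iff it is trivial in \<langle>S | R\<rangle>.\<close>
definition finitely_presented :: "('a, 'm) monoid_scheme \<Rightarrow> bool" where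
  "finitely_presented G \<longleftrightarrow> (\<exists>S R.
     finite S \<and> S \<subseteq> carrier G \<and> generate G S = carrier G \<and>
     finite R \<and> R \<subseteq> lists (UNIV \<times> S) \<and>
     (\<forall>w \<in> lists (UNIV \<times> S). word_eval G w = \<one>\<^bsub>G\<^esub> \<longleftrightarrow> pres_equiv S R w []))"

end

theory Submission
  imports Defs "HOL-Library.Sublist"
begin

text \<open>A map that is multiplicative on a large enough finite window of G already determines a
  homomorphism. Fix a finite presentation \<langle>S | R\<rangle> of G and words over S representing the
  elements of D. If the window contains the generators, the identity and the values of all
  suffixes of these words and of the relators, then a map \<phi> multiplicative on the window sends
  every relator to 1 and inverse letters to inverses. By von Dyck's theorem the assignment
  s \<mapsto> \<phi> s extends to a homomorphism \<psi> of G, and reading a word letter by letter shows that \<psi>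
  agrees with \<phi> on D. Applying metric local embeddability to such a window therefore gives an
  almost-homomorphism that is a genuine homomorphism.\<close>

definition letter :: "('a, 'm) monoid_scheme \<Rightarrow> bool \<times> 'a \<Rightarrow> 'a" where
  "letter G = (\<lambda>(b, s). if b then s else inv\<^bsub>G\<^esub> s)"

definition word_value :: "('b, 'n) monoid_scheme \<Rightarrow> (bool \<times> 'a \<Rightarrow> 'b) \<Rightarrow> 'a word \<Rightarrow> 'b" where
  "word_value C f w = foldr (\<lambda>x acc. f x \<otimes>\<^bsub>C\<^esub> acc) w \<one>\<^bsub>C\<^esub>"

definition inverse_word :: "'a word \<Rightarrow> 'a word" where
  "inverse_word w = rev (map (\<lambda>(b, s). (\<not> b, s)) w)"

definition respects_inverses :: "('b, 'n) monoid_scheme \<Rightarrow> 'a set \<Rightarrow> (bool \<times> 'a \<Rightarrow> 'b) \<Rightarrow> bool" where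
  "respects_inverses C S f \<longleftrightarrow>
     (\<forall>b. \<forall>s \<in> S. f (b, s) \<in> carrier C \<and> f (\<not> b, s) = inv\<^bsub>C\<^esub> f (b, s))"

definition local_hom ::
  "('a, 'm) monoid_scheme \<Rightarrow> ('b, 'n) monoid_scheme \<Rightarrow> 'a set \<Rightarrow> ('a \<Rightarrow> 'b) \<Rightarrow> bool" where
  "local_hom G C P \<phi> \<longleftrightarrow> \<phi> \<in> P \<rightarrow> carrier C \<and>
     (\<forall>h \<in> P. \<forall>g \<in> P. h \<otimes>\<^bsub>G\<^esub> g \<in> P \<longrightarrow> \<phi> (h \<otimes>\<^bsub>G\<^esub> g) = \<phi> h \<otimes>\<^bsub>C\<^esub> \<phi> g)"

lemma word_value_Nil [simp]: "word_value C f [] = \<one>\<^bsub>C\<^esub>"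
  by (simp add: word_value_def)

lemma word_value_Cons [simp]: "word_value C f (x # w) = f x \<otimes>\<^bsub>C\<^esub> word_value C f w"
  by (simp add: word_value_def)

lemma word_eval_eq_word_value: "word_eval G w = word_value G (letter G) w"
  unfolding word_eval_def word_value_def letter_def by (simp add: case_prod_unfold)

lemma inverse_word_Cons: "inverse_word ((b, s) # w) = inverse_word w @ [(\<not> b, s)]"
  by (simp add: inverse_word_def)

lemma inverse_word_in_lists: "w \<in> lists (UNIV \<times> S) \<Longrightarrow> inverse_word w \<in> lists (UNIV \<times> S)"
  by (auto simp: inverse_word_def)

lemma pres_step_lists:
  assumes "R \<subseteq> lists (UNIV \<times> S)" "pres_step S R x y"
  shows "x \<in> lists (UNIV \<times> S) \<longleftrightarrow> y \<in> lists (UNIV \<times> S)"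
proof -
  obtain u v z where "x = u @ v" "y = u @ z @ v"
    and z: "(\<exists>b s. s \<in> S \<and> z = [(b, s), (\<not> b, s)]) \<or> z \<in> R"
    using assms(2) unfolding pres_step_def by blast
  moreover have "z \<in> lists (UNIV \<times> S)"
    using z assms(1) by auto
  ultimately show ?thesis by auto
qed

context group
begin

lemma word_value_closed:
  "respects_inverses G S f \<Longrightarrow> w \<in> lists (UNIV \<times> S) \<Longrightarrow> word_value G f w \<in> carrier G"
  by (induction w) (auto simp: respects_inverses_def)

lemma word_value_append:
  assumes "respects_inverses G S f" "u \<in> lists (UNIV \<times> S)" "v \<in> lists (UNIV \<times> S)"
  shows "word_value G f (u @ v) = word_value G f u \<otimes> word_value G f v"
  using assms(2)
proof (induction u)
  case (Cons x u)
  then have "f x \<in> carrier G" "word_value G f u \<in> carrier G" "word_value G f v \<in> carrier G"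
    using assms by (auto simp: word_value_closed respects_inverses_def)
  with Cons show ?case by (simp add: m_assoc)
qed (simp add: word_value_closed[OF assms(1,3)])

lemma word_value_inverse_word:
  assumes f: "respects_inverses G S f"
  shows "w \<in> lists (UNIV \<times> S) \<Longrightarrow> word_value G f (inverse_word w) = inv (word_value G f w)"
proof (induction w)
  case (Cons x w)
  obtain b s where x: "x = (b, s)" by (cases x)
  with Cons.prems have s: "s \<in> S" by auto
  have fx: "f (b, s) \<in> carrier G" "f (\<not> b, s) = inv f (b, s)"
    using f s by (auto simp: respects_inverses_def)
  have "word_value G f (inverse_word (x # w)) = inv (word_value G f w) \<otimes> inv f (b, s)"
    using Cons f s fx by (simp add: x inverse_word_Cons word_value_append inverse_word_in_lists)
  also have "\<dots> = inv (f (b, s) \<otimes> word_value G f w)"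
    using Cons.prems f fx by (simp add: inv_mult_group word_value_closed)
  finally show ?case by (simp add: x)
qed (simp add: inverse_word_def)

lemma letter_respects_inverses: "S \<subseteq> carrier G \<Longrightarrow> respects_inverses G S (letter G)"
  by (auto simp: respects_inverses_def letter_def)

lemma word_eval_closed: "S \<subseteq> carrier G \<Longrightarrow> w \<in> lists (UNIV \<times> S) \<Longrightarrow> word_eval G w \<in> carrier G"
  by (simp add: word_eval_eq_word_value word_value_closed[OF letter_respects_inverses])

lemma word_eval_append:
  "S \<subseteq> carrier G \<Longrightarrow> u \<in> lists (UNIV \<times> S) \<Longrightarrow> v \<in> lists (UNIV \<times> S)
    \<Longrightarrow> word_eval G (u @ v) = word_eval G u \<otimes> word_eval G v"
  by (simp add: word_eval_eq_word_value word_value_append[OF letter_respects_inverses])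

lemma word_eval_inverse_word:
  "S \<subseteq> carrier G \<Longrightarrow> w \<in> lists (UNIV \<times> S) \<Longrightarrow> word_eval G (inverse_word w) = inv (word_eval G w)"
  by (simp add: word_eval_eq_word_value word_value_inverse_word[OF letter_respects_inverses])

lemma generate_word_eval:
  assumes "S \<subseteq> carrier G" "g \<in> generate G S"
  shows "\<exists>w \<in> lists (UNIV \<times> S). word_eval G w = g"
  using assms(2)
proof (induction rule: generate.induct)
  case one
  show ?case by (intro bexI[of _ "[]"]) (auto simp: word_eval_eq_word_value)
next
  case (incl h)
  then show ?case using assms(1)
    by (intro bexI[of _ "[(True, h)]"]) (auto simp: word_eval_eq_word_value letter_def)
next
  case (inv h)
  then show ?case using assms(1)
    by (intro bexI[of _ "[(False, h)]"]) (auto simp: word_eval_eq_word_value letter_def)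
next
  case (eng h1 h2)
  then obtain w1 w2 where "w1 \<in> lists (UNIV \<times> S)" "w2 \<in> lists (UNIV \<times> S)"
    "word_eval G w1 = h1" "word_eval G w2 = h2" by blast
  then show ?case using assms(1) by (intro bexI[of _ "w1 @ w2"]) (auto simp: word_eval_append)
qed

lemma word_value_pres_step:
  assumes f: "respects_inverses G S f" and rel: "\<forall>r \<in> R. word_value G f r = \<one>"
    and step: "pres_step S R x y" and y: "y \<in> lists (UNIV \<times> S)"
  shows "word_value G f x = word_value G f y"
proof -
  obtain u v z where x: "x = u @ v" and yz: "y = u @ z @ v"
    and z: "(\<exists>b s. s \<in> S \<and> z = [(b, s), (\<not> b, s)]) \<or> z \<in> R"
    using step unfolding pres_step_def by blast
  have uvz: "u \<in> lists (UNIV \<times> S)" "v \<in> lists (UNIV \<times> S)" "z \<in> lists (UNIV \<times> S)"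
    using y yz by auto
  have "word_value G f z = \<one>"
    using z rel f by (auto simp: respects_inverses_def)
  then show ?thesis
    using uvz f by (simp add: x yz word_value_append word_value_closed)
qed

lemma word_value_pres_equiv:
  assumes f: "respects_inverses G S f" and R: "R \<subseteq> lists (UNIV \<times> S)"
    and rel: "\<forall>r \<in> R. word_value G f r = \<one>"
    and equiv: "pres_equiv S R x y" and x: "x \<in> lists (UNIV \<times> S)"
  shows "word_value G f x = word_value G f y"
proof -
  have "y \<in> lists (UNIV \<times> S) \<and> word_value G f x = word_value G f y"
    using equiv unfolding pres_equiv_def
  proof (induction rule: rtranclp_induct)
    case (step y z)
    then show ?case
      using pres_step_lists[OF R] word_value_pres_step[OF f rel] by metis
  qed (use x in simp)
  then show ?thesis ..
qed

end

lemma local_hom_one: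
  assumes G: "group G" and C: "group C" and \<phi>: "local_hom G C P \<phi>" and one: "\<one>\<^bsub>G\<^esub> \<in> P"
  shows "\<phi> \<one>\<^bsub>G\<^esub> = \<one>\<^bsub>C\<^esub>"
proof -
  have "\<one>\<^bsub>G\<^esub> \<otimes>\<^bsub>G\<^esub> \<one>\<^bsub>G\<^esub> = \<one>\<^bsub>G\<^esub>"
    using group.is_monoid[OF G] by (simp add: monoid.l_one monoid.one_closed)
  then have "\<phi> \<one>\<^bsub>G\<^esub> \<in> carrier C" "\<phi> \<one>\<^bsub>G\<^esub> = \<phi> \<one>\<^bsub>G\<^esub> \<otimes>\<^bsub>C\<^esub> \<phi> \<one>\<^bsub>G\<^esub>"
    using \<phi> one unfolding local_hom_def by (blast, metis)
  then show ?thesis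
    using group.l_cancel_one'[OF C] by blast
qed

lemma local_hom_inv:
  assumes G: "group G" and C: "group C" and \<phi>: "local_hom G C P \<phi>" and one: "\<one>\<^bsub>G\<^esub> \<in> P"
    and a: "a \<in> carrier G" "a \<in> P" "inv\<^bsub>G\<^esub> a \<in> P"
  shows "\<phi> (inv\<^bsub>G\<^esub> a) = inv\<^bsub>C\<^esub> \<phi> a"
proof -
  have "inv\<^bsub>G\<^esub> a \<otimes>\<^bsub>G\<^esub> a = \<one>\<^bsub>G\<^esub>"
    using group.l_inv[OF G a(1)] .
  then have "\<phi> (inv\<^bsub>G\<^esub> a) \<otimes>\<^bsub>C\<^esub> \<phi> a = \<phi> \<one>\<^bsub>G\<^esub>"
    using \<phi> a one unfolding local_hom_def by metis
  also have "\<dots> = \<one>\<^bsub>C\<^esub>"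
    using local_hom_one[OF G C \<phi> one] .
  finally have "\<phi> (inv\<^bsub>G\<^esub> a) \<otimes>\<^bsub>C\<^esub> \<phi> a = \<one>\<^bsub>C\<^esub>" .
  moreover have "\<phi> a \<in> carrier C" "\<phi> (inv\<^bsub>G\<^esub> a) \<in> carrier C"
    using \<phi> a unfolding local_hom_def by auto
  ultimately show ?thesis
    by (metis group.inv_equality[OF C])
qed

lemma local_hom_letter_respects_inverses:
  assumes G: "group G" and C: "group C" and \<phi>: "local_hom G C P \<phi>" and one: "\<one>\<^bsub>G\<^esub> \<in> P"
    and S: "S \<subseteq> carrier G" and letters: "letter G ` (UNIV \<times> S) \<subseteq> P"
  shows "respects_inverses C S (\<phi> \<circ> letter G)"
  unfolding respects_inverses_def
proof (intro allI ballI)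
  fix b s assume s: "s \<in> S"
  have "letter G (True, s) \<in> P" "letter G (False, s) \<in> P"
    using letters s by auto
  then have P: "s \<in> P" "inv\<^bsub>G\<^esub> s \<in> P"
    by (simp_all add: letter_def)
  have s_carrier: "s \<in> carrier G" "inv\<^bsub>G\<^esub> s \<in> carrier G"
    using s S group.inv_closed[OF G] by auto
  have "\<phi> (inv\<^bsub>G\<^esub> s) = inv\<^bsub>C\<^esub> \<phi> s" "\<phi> s = inv\<^bsub>C\<^esub> \<phi> (inv\<^bsub>G\<^esub> s)"
    using local_hom_inv[OF G C \<phi> one, of s] local_hom_inv[OF G C \<phi> one, of "inv\<^bsub>G\<^esub> s"]
      P s_carrier group.inv_inv[OF G] by simp_all
  moreover have "\<phi> s \<in> carrier C" "\<phi> (inv\<^bsub>G\<^esub> s) \<in> carrier C"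
    using \<phi> P unfolding local_hom_def by auto
  ultimately show "(\<phi> \<circ> letter G) (b, s) \<in> carrier C \<and>
      (\<phi> \<circ> letter G) (\<not> b, s) = inv\<^bsub>C\<^esub> (\<phi> \<circ> letter G) (b, s)"
    by (cases b) (simp_all add: letter_def)
qed

lemma local_hom_word_eval:
  assumes G: "group G" and C: "group C" and \<phi>: "local_hom G C P \<phi>"
  shows "letter G ` set w \<subseteq> P \<Longrightarrow> word_eval G ` set (suffixes w) \<subseteq> P
    \<Longrightarrow> \<phi> (word_eval G w) = word_value C (\<phi> \<circ> letter G) w"
proof (induction w)
  case Nil
  then show ?case
    using local_hom_one[OF G C \<phi>] by (simp add: word_eval_eq_word_value)
next
  case (Cons x w)
  have "word_eval G (x # w) = letter G x \<otimes>\<^bsub>G\<^esub> word_eval G w"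
    by (simp add: word_eval_eq_word_value)
  moreover have "word_eval G w \<in> P"
    using Cons.prems(2) by (auto simp: image_subset_iff)
  ultimately show ?case
    using Cons \<phi>
    by (simp add: local_hom_def)
qed

lemma almost_hom_local_hom: "almost_hom G l C lC P Q \<phi> \<Longrightarrow> P \<subseteq> carrier G \<Longrightarrow> local_hom G C P \<phi>"
  by (auto simp: almost_hom_def local_hom_def)

lemma almost_hom_agreeing_hom:
  assumes \<phi>: "almost_hom G l C lC P Q \<phi>" and D: "D \<subseteq> P" "D \<subseteq> carrier G"
    and \<psi>: "\<psi> \<in> hom G C" "\<forall>d \<in> D. \<psi> d = \<phi> d"
  shows "almost_hom G l C lC D Q \<psi>"
  unfolding almost_hom_def
proof (intro conjI)
  show "\<psi> \<in> carrier G \<rightarrow> carrier C"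
    using \<psi>(1) by (simp add: hom_def)
  show "inj_on \<psi> D"
    using \<phi> D \<psi>(2) unfolding almost_hom_def by (metis inj_on_cong inj_on_subset)
  show "\<forall>h \<in> D. \<forall>g \<in> D. h \<otimes>\<^bsub>G\<^esub> g \<in> D \<longrightarrow> \<psi> (h \<otimes>\<^bsub>G\<^esub> g) = \<psi> h \<otimes>\<^bsub>C\<^esub> \<psi> g"
    using \<psi>(1) D(2) by (meson hom_mult subsetD)
  show "\<forall>g \<in> D. \<forall>q \<in> Q. (l g < q \<longleftrightarrow> lC (\<psi> g) < q) \<and> (l g = q \<longleftrightarrow> lC (\<psi> g) = q)
      \<and> (l g > q \<longleftrightarrow> lC (\<psi> g) > q)"
    using \<phi> D(1) \<psi>(2) unfolding almost_hom_def by auto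
qed

locale group_presentation = group G for G :: "('a, 'm) monoid_scheme" +
  fixes S :: "'a set" and R :: "'a word set"
  assumes generators_closed: "S \<subseteq> carrier G"
    and generate_generators: "generate G S = carrier G"
    and relators_words: "R \<subseteq> lists (UNIV \<times> S)"
    and word_eval_eq_one_iff: "\<And>w. w \<in> lists (UNIV \<times> S) \<Longrightarrow> word_eval G w = \<one>\<^bsub>G\<^esub> \<longleftrightarrow> pres_equiv S R w []"
begin

lemma relator_trivial:
  assumes r: "r \<in> R"
  shows "word_eval G r = \<one>\<^bsub>G\<^esub>"
proof -
  have "pres_step S R [] r"
    using r unfolding pres_step_def by force
  then have "pres_equiv S R r []"
    unfolding pres_equiv_def by (simp add: r_into_rtranclp)
  moreover have "r \<in> lists (UNIV \<times> S)"
    using r relators_words by blast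
  ultimately show ?thesis
    using word_eval_eq_one_iff by simp
qed

lemma word_value_eq_if_word_eval_eq:
  assumes C: "group C" and f: "respects_inverses C S f" and rel: "\<forall>r \<in> R. word_value C f r = \<one>\<^bsub>C\<^esub>"
    and w1: "w1 \<in> lists (UNIV \<times> S)" and w2: "w2 \<in> lists (UNIV \<times> S)"
    and eq: "word_eval G w1 = word_eval G w2"
  shows "word_value C f w1 = word_value C f w2"
proof -
  let ?w = "w1 @ inverse_word w2"
  have w: "?w \<in> lists (UNIV \<times> S)"
    using w1 w2 by (simp add: inverse_word_in_lists)
  have "word_eval G ?w = \<one>\<^bsub>G\<^esub>"
    using w1 w2 eq generators_closed
    by (simp add: word_eval_append word_eval_inverse_word inverse_word_in_lists word_eval_closed)
  then have "pres_equiv S R ?w []"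
    using word_eval_eq_one_iff[OF w] by simp
  then have "word_value C f ?w = \<one>\<^bsub>C\<^esub>"
    using group.word_value_pres_equiv[OF C f relators_words rel _ w] by simp
  moreover have "word_value C f ?w = word_value C f w1 \<otimes>\<^bsub>C\<^esub> inv\<^bsub>C\<^esub> word_value C f w2"
    using group.word_value_append[OF C f w1 inverse_word_in_lists[OF w2]]
      group.word_value_inverse_word[OF C f w2] by simp
  ultimately have "\<one>\<^bsub>C\<^esub> = word_value C f w1 \<otimes>\<^bsub>C\<^esub> inv\<^bsub>C\<^esub> word_value C f w2"
    by simp
  then show ?thesis
    using w1 w2 group.word_value_closed[OF C f] group.inv_solve_right[OF C] group.is_monoid[OF C]
    by (metis monoid.l_one monoid.one_closed)
qed

lemma hom_extending_word_value:
  assumes C: "group C" and f: "respects_inverses C S f" and rel: "\<forall>r \<in> R. word_value C f r = \<one>\<^bsub>C\<^esub>"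
  obtains \<psi> where "\<psi> \<in> hom G C" "\<And>w. w \<in> lists (UNIV \<times> S) \<Longrightarrow> \<psi> (word_eval G w) = word_value C f w"
proof -
  define word where "word g = (SOME w. w \<in> lists (UNIV \<times> S) \<and> word_eval G w = g)" for g
  have word: "word g \<in> lists (UNIV \<times> S) \<and> word_eval G (word g) = g" if "g \<in> carrier G" for g
    using generate_word_eval[OF generators_closed] that generate_generators
    unfolding word_def by (metis (mono_tags, lifting) someI_ex)
  define \<psi> where "\<psi> g = word_value C f (word g)" for g
  have \<psi>_word_eval: "\<psi> (word_eval G w) = word_value C f w" if w: "w \<in> lists (UNIV \<times> S)" for w
    using word_value_eq_if_word_eval_eq[OF C f rel] word word_eval_closed[OF generators_closed w] w
    unfolding \<psi>_def by blast
  have "\<psi> \<in> hom G C"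
  proof (rule homI)
    fix g assume "g \<in> carrier G"
    then show "\<psi> g \<in> carrier C"
      using word group.word_value_closed[OF C f] unfolding \<psi>_def by blast
  next
    fix g h assume g: "g \<in> carrier G" and h: "h \<in> carrier G"
    then have "g \<otimes>\<^bsub>G\<^esub> h = word_eval G (word g @ word h)"
      using word by (simp add: word_eval_append[OF generators_closed])
    then show "\<psi> (g \<otimes>\<^bsub>G\<^esub> h) = \<psi> g \<otimes>\<^bsub>C\<^esub> \<psi> h"
      using \<psi>_word_eval word g h by (simp add: \<psi>_def group.word_value_append[OF C f])
  qed
  with that \<psi>_word_eval show thesis by blast
qed

lemma local_hom_extends_to_hom:
  assumes C: "group C" and \<phi>: "local_hom G C P \<phi>" and one: "\<one>\<^bsub>G\<^esub> \<in> P"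
    and letters: "letter G ` (UNIV \<times> S) \<subseteq> P"
    and relator_suffixes: "\<And>r. r \<in> R \<Longrightarrow> word_eval G ` set (suffixes r) \<subseteq> P"
  obtains \<psi> where "\<psi> \<in> hom G C"
    "\<And>w. w \<in> lists (UNIV \<times> S) \<Longrightarrow> word_eval G ` set (suffixes w) \<subseteq> P
      \<Longrightarrow> \<psi> (word_eval G w) = \<phi> (word_eval G w)"
proof -
  let ?f = "\<phi> \<circ> letter G"
  have f: "respects_inverses C S ?f"
    by (rule local_hom_letter_respects_inverses[OF is_group C \<phi> one generators_closed letters])
  have read: "\<phi> (word_eval G w) = word_value C ?f w"
    if "w \<in> lists (UNIV \<times> S)" "word_eval G ` set (suffixes w) \<subseteq> P" for w
  proof (rule local_hom_word_eval[OF is_group C \<phi> _ that(2)])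
    from that(1) have "set w \<subseteq> UNIV \<times> S"
      by (simp add: lists_eq_set)
    then show "letter G ` set w \<subseteq> P"
      using letters by blast
  qed
  have rel: "\<forall>r \<in> R. word_value C ?f r = \<one>\<^bsub>C\<^esub>"
  proof
    fix r assume r: "r \<in> R"
    then have "r \<in> lists (UNIV \<times> S)"
      using relators_words by blast
    then have "word_value C ?f r = \<phi> (word_eval G r)"
      using read relator_suffixes[OF r] by simp
    also have "\<dots> = \<one>\<^bsub>C\<^esub>"
      using relator_trivial[OF r] local_hom_one[OF is_group C \<phi> one] by (rule trans[OF arg_cong])
    finally show "word_value C ?f r = \<one>\<^bsub>C\<^esub>" .
  qed
  obtain \<psi> where \<psi>: "\<psi> \<in> hom G C"
    "\<And>w. w \<in> lists (UNIV \<times> S) \<Longrightarrow> \<psi> (word_eval G w) = word_value C ?f w"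
    using hom_extending_word_value[OF C f rel] by blast
  with read that show thesis by simp
qed

lemma window_for_hom_extension:
  assumes finite: "finite S" "finite R" "finite D" and D: "D \<subseteq> carrier G"
  obtains P where "finite P" "D \<subseteq> P" "P \<subseteq> carrier G"
    "\<And>C \<phi>. group C \<Longrightarrow> local_hom G C P \<phi> \<Longrightarrow> \<exists>\<psi> \<in> hom G C. \<forall>d \<in> D. \<psi> d = \<phi> d"
proof -
  have "\<forall>d \<in> D. \<exists>w. w \<in> lists (UNIV \<times> S) \<and> word_eval G w = d"
    using D generate_word_eval[OF generators_closed] generate_generators by blast
  then obtain word where word: "\<And>d. d \<in> D \<Longrightarrow> word d \<in> lists (UNIV \<times> S) \<and> word_eval G (word d) = d"
    by metis
  define W where "W = word ` D \<union> R"
  have W: "finite W" "W \<subseteq> lists (UNIV \<times> S)"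
    using finite word relators_words unfolding W_def by auto
  define P where
    "P = D \<union> {\<one>\<^bsub>G\<^esub>} \<union> letter G ` (UNIV \<times> S) \<union> (\<Union>w \<in> W. word_eval G ` set (suffixes w))"
  have suffixes_in_P: "word_eval G ` set (suffixes w) \<subseteq> P" if "w \<in> W" for w
    using that unfolding P_def by blast
  have "finite P"
    using finite W(1) unfolding P_def by auto
  moreover have "P \<subseteq> carrier G"
  proof -
    have "word_eval G v \<in> carrier G" if "w \<in> W" "suffix v w" for v w
    proof -
      have "v \<in> lists (UNIV \<times> S)"
        using W(2) that set_mono_suffix by blast
      then show ?thesis
        using word_eval_closed[OF generators_closed] by blast
    qed
    then show ?thesis
      using D generators_closed unfolding P_def by (auto simp: letter_def)
  qed
  moreover have "\<exists>\<psi> \<in> hom G C. \<forall>d \<in> D. \<psi> d = \<phi> d" if C: "group C" and \<phi>: "local_hom G C P \<phi>" for C \<phi>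
  proof -
    have "\<one>\<^bsub>G\<^esub> \<in> P" "letter G ` (UNIV \<times> S) \<subseteq> P"
      unfolding P_def by blast+
    moreover have "\<And>r. r \<in> R \<Longrightarrow> word_eval G ` set (suffixes r) \<subseteq> P"
      using suffixes_in_P unfolding W_def by blast
    ultimately obtain \<psi> where \<psi>: "\<psi> \<in> hom G C"
      "\<And>w. w \<in> lists (UNIV \<times> S) \<Longrightarrow> word_eval G ` set (suffixes w) \<subseteq> P
        \<Longrightarrow> \<psi> (word_eval G w) = \<phi> (word_eval G w)"
      using local_hom_extends_to_hom[OF C \<phi>] by blast
    have "\<psi> d = \<phi> d" if "d \<in> D" for d
    proof -
      have "word d \<in> W"
        using that unfolding W_def by blast
      then show ?thesis
        using \<psi>(2) suffixes_in_P word[OF that] by metis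
    qed
    with \<psi>(1) show ?thesis by blast
  qed
  moreover have "D \<subseteq> P"
    unfolding P_def by blast
  ultimately show thesis
    using that by blast
qed

end

theorem corollary5p6:
  fixes \<Lambda> :: "real set"
    and \<C> :: "('b monoid \<times> ('b \<Rightarrow> real)) set"
    and G :: "('a, 'm) monoid_scheme"
    and l :: "'a \<Rightarrow> real"
  assumes Lambda_closed: "closed \<Lambda>"
    and Lambda_convex: "convex \<Lambda>"
    and Lambda_nonneg: "\<Lambda> \<subseteq> {0..}"
    and Lambda_zero: "0 \<in> \<Lambda>"
    and C_groups: "\<And>C lC. (C, lC) \<in> \<C> \<Longrightarrow> group C \<and> invariant_pseudo_norm \<Lambda> C lC"
    and C_subgroups: "\<And>C lC H. (C, lC) \<in> \<C> \<Longrightarrow> subgroup H C \<Longrightarrow> (C\<lparr>carrier := H\<rparr>, lC) \<in> \<C>"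
    and C_iso: "\<And>C lC C' lC' f. (C, lC) \<in> \<C> \<Longrightarrow> group C' \<Longrightarrow> f \<in> iso C C'
                  \<Longrightarrow> (\<forall>x \<in> carrier C. lC' (f x) = lC x) \<Longrightarrow> (C', lC') \<in> \<C>"
    and G_group: "group G"
    and G_fp: "finitely_presented G"
    and l_norm: "invariant_pseudo_norm \<Lambda> G l"
    and LE: "metrically_LE \<Lambda> \<C> G l"
  shows "fully_residually \<Lambda> \<C> G l"
  unfolding fully_residually_def
proof (intro allI impI)
  fix D Q assume adm: "admissible_data \<Lambda> G D Q"
  then have D: "finite D" "D \<subseteq> carrier G"
    unfolding admissible_data_def by auto
  obtain S R where SR: "finite S" "finite R" and "S \<subseteq> carrier G" "generate G S = carrier G"
    "R \<subseteq> lists (UNIV \<times> S)"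
    "\<forall>w \<in> lists (UNIV \<times> S). word_eval G w = \<one>\<^bsub>G\<^esub> \<longleftrightarrow> pres_equiv S R w []"
    using G_fp unfolding finitely_presented_def by blast
  then have pres: "group_presentation G S R"
    using G_group by (simp add: group_presentation_def group_presentation_axioms_def)
  obtain P where P: "finite P" "D \<subseteq> P" "P \<subseteq> carrier G"
    and extend: "\<And>(C :: 'b monoid) \<phi>. group C \<Longrightarrow> local_hom G C P \<phi> \<Longrightarrow> \<exists>\<psi> \<in> hom G C. \<forall>d \<in> D. \<psi> d = \<phi> d"
    using group_presentation.window_for_hom_extension[OF pres SR D] by blast
  have "admissible_data \<Lambda> G P Q"
    using adm P unfolding admissible_data_def by auto
  then obtain C lC \<phi> where C: "(C, lC) \<in> \<C>" and \<phi>: "almost_hom G l C lC P Q \<phi>"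
    using LE unfolding metrically_LE_def by blast
  obtain \<psi> where \<psi>: "\<psi> \<in> hom G C" "\<forall>d \<in> D. \<psi> d = \<phi> d"
    using extend[OF conjunct1[OF C_groups[OF C]] almost_hom_local_hom[OF \<phi> P(3)]] by blast
  then have "almost_hom G l C lC D Q \<psi>"
    using almost_hom_agreeing_hom[OF \<phi> P(2) D(2)] by blast
  with C \<psi>(1) show "\<exists>(C, lC) \<in> \<C>. \<exists>\<phi> \<in> hom G C. almost_hom G l C lC D Q \<phi>"
    by blast
qed

end
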